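(* Let $Q := (-1/2,1/2) \times (-1/2,1/2) \subset \mathbb{R}^{2}$ and let $\chi_{\varepsilon}(x) := \varepsilon^{-2}\chi_{Q}(x/\varepsilon)$ for $\varepsilon > 0$. Let $\mu$ be a compactly supported Radon measure on $\mathbb{R}^{2}$ and write $\mu_{\varepsilon} := \chi_{\varepsilon} \ast \mu$ (a function on $\mathbb{R}^2$). Then for every $t \in \mathbb{R}$ such that the sliced measure $\mu_{t} := \mu_{\rho_{2},t}$ exists, \[ \int_{\mathbb{R}^{2}} \eta \, d\mu_{t} = \lim_{\varepsilon \to 0} \int_{\mathbb{R}} \eta(s,t)\mu_{\varepsilon}(s,t) \, ds \quad \text{for all } \eta \in C(\mathbb{R}^{2}). \] Moreover, the convergence is uniform on any family $K \subset C(\mathbb{R}^{2})$ which is compact in the sup-norm topology.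
   Context: $\rho_2 \colon \mathbb{R}^2 \to \mathbb{R}$, $\rho_2(x_1,x_2) = x_2$. For a compactly supported Radon measure $\mu$ on $\mathbb{R}^2$ and $t \in \mathbb{R}$, the sliced measure $\mu_{\rho_2,t}$ is said to exist if for every $\eta \in C(\mathbb{R}^{2})$ the limit $\lim_{\delta \to 0}(2\delta)^{-1}\int_{\rho_2^{-1}(t-\delta,t+\delta)} \eta \, d\mu$ exists; $\mu_{\rho_2,t}$ is then the Radon measure with $\int \eta \, d\mu_{\rho_2,t}$ equal to this limit (it is supported in $\operatorname{spt}\mu \cap \rho_2^{-1}\{t\}$). It exists for $\mathcal{L}^1$-almost every $t$. *)

theory Defs
  imports "HOL-Analysis.Analysis"
begin

definition rho2 :: "real \<times> real \<Rightarrow> real" where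
  "rho2 x = snd x"

definition Qbox :: "(real \<times> real) set" where
  "Qbox = {x. -1/2 < fst x \<and> fst x < 1/2 \<and> -1/2 < snd x \<and> snd x < 1/2}"

definition chi_eps :: "real \<Rightarrow> real \<times> real \<Rightarrow> real" where
  "chi_eps \<epsilon> x = \<epsilon> powi (-2) * indicator Qbox ((1/\<epsilon>) *\<^sub>R x)"

definition mu_eps :: "(real \<times> real) measure \<Rightarrow> real \<Rightarrow> real \<times> real \<Rightarrow> real" where
  "mu_eps M \<epsilon> x = (\<integral>y. chi_eps \<epsilon> (x - y) \<partial>M)"

definition compact_radon :: "(real \<times> real) measure \<Rightarrow> bool" where
  "compact_radon M \<longleftrightarrow> sets M = sets borel \<and> finite_measure M \<and>
     (\<exists>C. compact C \<and> emeasure M (UNIV - C) = 0)"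

definition slab_avg :: "(real \<times> real) measure \<Rightarrow> real \<Rightarrow> (real \<times> real \<Rightarrow> real) \<Rightarrow> real \<Rightarrow> real" where
  "slab_avg M t \<eta> \<delta> = (1 / (2 * \<delta>)) *
     (\<integral>x. indicator (rho2 -` {t - \<delta> <..< t + \<delta>}) x * \<eta> x \<partial>M)"

definition slice_exists :: "(real \<times> real) measure \<Rightarrow> real \<Rightarrow> bool" where
  "slice_exists M t \<longleftrightarrow>
     (\<forall>\<eta>. continuous_on UNIV \<eta> \<longrightarrow> (\<exists>L. (slab_avg M t \<eta> \<longlongrightarrow> L) (at_right 0)))"

definition slice_integral :: "(real \<times> real) measure \<Rightarrow> real \<Rightarrow> (real \<times> real \<Rightarrow> real) \<Rightarrow> real" where
  "slice_integral M t \<eta> = Lim (at_right 0) (slab_avg M t \<eta>)"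

definition sup_compact :: "(real \<times> real \<Rightarrow> real) set \<Rightarrow> bool" where
  "sup_compact K \<longleftrightarrow> (\<forall>f :: nat \<Rightarrow> real \<times> real \<Rightarrow> real. (\<forall>n. f n \<in> K) \<longrightarrow>
     (\<exists>r g. strict_mono r \<and> g \<in> K \<and> uniform_limit (UNIV :: (real \<times> real) set) (\<lambda>n. f (r n)) g sequentially))"

end

theory Submission
  imports Defs
begin

text \<open>
  By Fubini, \<open>\<integral> \<eta>(s,t) \<mu>\<^sub>\<epsilon>(s,t) ds\<close> is the \<open>\<mu>\<close>-integral of
  \<open>y \<mapsto> \<epsilon>\<^sup>-\<^sup>2 [|y\<^sub>2 - t| < \<epsilon>/2] \<integral>{|s - y\<^sub>1| < \<epsilon>/2} \<eta>(s,t) ds\<close>.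
  For \<open>y\<close> in the compact support the inner average differs from \<open>\<eta>(y)\<close> by at most
  the oscillation of \<open>\<eta>\<close> at scale \<open>\<epsilon>\<close> there, so the whole expression is close
  to the slab average at \<open>\<delta> = \<epsilon>/2\<close>, which tends to \<open>\<integral> \<eta> d\<mu>\<^sub>t\<close> by assumption.
  If \<open>\<eta>\<close> is within \<open>c\<close> of a fixed continuous \<open>g\<close> in sup norm, its oscillation is
  at most that of \<open>g\<close> plus \<open>2c\<close>, and slab averages and the slice move by at most
  \<open>c\<close> times the slab mass; hence the convergence is uniform on a sup-norm
  neighbourhood of \<open>g\<close>. Sequential compactness of \<open>K\<close> turns this local
  uniformity into uniform convergence on \<open>K\<close>.
\<close>

lemma uniform_limit_at_right_if_locally_uniform:
  fixes F :: "real \<Rightarrow> ('a \<Rightarrow> 'b::metric_space) \<Rightarrow> 'c::metric_space"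
  assumes seq_compact: "\<And>f :: nat \<Rightarrow> 'a \<Rightarrow> 'b. (\<And>n. f n \<in> K) \<Longrightarrow>
      \<exists>r g. strict_mono r \<and> g \<in> K \<and> uniform_limit UNIV (\<lambda>n. f (r n)) g sequentially"
    and locally_uniform: "\<And>g e. g \<in> K \<Longrightarrow> 0 < e \<Longrightarrow> \<exists>c>0. eventually
      (\<lambda>\<epsilon>. \<forall>\<eta>\<in>K. (\<forall>x. dist (\<eta> x) (g x) < c) \<longrightarrow> dist (F \<epsilon> \<eta>) (L \<eta>) < e) (at_right 0)"
  shows "uniform_limit K F L (at_right 0)"
  unfolding uniform_limit_iff
proof (intro allI impI)
  fix e :: real assume "0 < e"
  show "eventually (\<lambda>\<epsilon>. \<forall>\<eta>\<in>K. dist (F \<epsilon> \<eta>) (L \<eta>) < e) (at_right 0)"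
  proof (rule ccontr)
    assume "\<not> ?thesis"
    then have "\<forall>n. \<exists>\<epsilon>. \<exists>\<eta>. 0 < \<epsilon> \<and> \<epsilon> < inverse (Suc n) \<and> \<eta> \<in> K \<and> \<not> dist (F \<epsilon> \<eta>) (L \<eta>) < e"
      unfolding eventually_at_right_field by (metis of_nat_0_less_iff positive_imp_inverse_positive zero_less_Suc)
    from choice[OF this] obtain \<epsilon> where
      "\<forall>n. \<exists>\<eta>. 0 < \<epsilon> n \<and> \<epsilon> n < inverse (Suc n) \<and> \<eta> \<in> K \<and> \<not> dist (F (\<epsilon> n) \<eta>) (L \<eta>) < e" ..
    from choice[OF this] obtain \<eta> where \<epsilon>: "\<And>n. 0 < \<epsilon> n" "\<And>n. \<epsilon> n < inverse (Suc n)"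
      and \<eta>: "\<And>n. \<eta> n \<in> K" and bad: "\<And>n. \<not> dist (F (\<epsilon> n) (\<eta> n)) (L (\<eta> n)) < e"
      by auto
    obtain r g where r: "strict_mono r" and "g \<in> K"
      and lim: "uniform_limit UNIV (\<lambda>n. \<eta> (r n)) g sequentially"
      using seq_compact[of \<eta>] \<eta> by blast
    obtain c where "0 < c" and good: "eventually
        (\<lambda>\<epsilon>. \<forall>\<eta>\<in>K. (\<forall>x. dist (\<eta> x) (g x) < c) \<longrightarrow> dist (F \<epsilon> \<eta>) (L \<eta>) < e) (at_right 0)"
      using locally_uniform[OF \<open>g \<in> K\<close> \<open>0 < e\<close>] by blast
    have "\<epsilon> \<longlonglongrightarrow> 0"
      by (rule tendsto_sandwich[OF _ _ tendsto_const LIMSEQ_inverse_real_of_nat])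
        (use \<epsilon> in \<open>auto intro!: always_eventually less_imp_le\<close>)
    then have "filterlim (\<lambda>n. \<epsilon> (r n)) (at_right 0) sequentially"
      unfolding filterlim_at using LIMSEQ_subseq_LIMSEQ[OF _ r] \<epsilon>(1)
      by (auto simp: o_def less_imp_neq[symmetric] intro!: always_eventually)
    from filterlim_iff[THEN iffD1, OF this, rule_format, OF good]
      and lim[unfolded uniform_limit_iff, rule_format, OF \<open>0 < c\<close>]
    have "eventually (\<lambda>n. dist (F (\<epsilon> (r n)) (\<eta> (r n))) (L (\<eta> (r n))) < e) sequentially"
      by eventually_elim (use \<eta> in blast)
    then show False
      using bad by (simp add: eventually_sequentially)
  qed
qed

lemma uniformly_continuous_near_compact:
  fixes g :: "'a::heine_borel \<Rightarrow> 'b::metric_space"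
  assumes "compact C" and "continuous_on UNIV g" and "0 < e"
  obtains d where "0 < d" and "\<And>y x. y \<in> C \<Longrightarrow> dist x y < d \<Longrightarrow> dist (g x) (g y) < e"
proof -
  let ?D = "\<Union>y\<in>C. cball y 1"
  have "uniformly_continuous_on ?D g"
    by (intro compact_uniformly_continuous continuous_on_subset[OF assms(2)]
        compact_minkowski_sum_cball assms(1)) auto
  then obtain d where "0 < d" and d: "\<And>x x'. x \<in> ?D \<Longrightarrow> x' \<in> ?D \<Longrightarrow> dist x' x < d \<Longrightarrow> dist (g x') (g x) < e"
    unfolding uniformly_continuous_on_def using \<open>0 < e\<close> by metis
  show thesis
  proof (rule that[of "min d 1"])
    fix y x assume "y \<in> C" and "dist x y < min d 1"
    then have "x \<in> ?D" and "y \<in> ?D" by (auto simp: dist_commute intro!: bexI[of _ y])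
    then show "dist (g x) (g y) < e" using d \<open>dist x y < min d 1\<close> by simp
  qed (use \<open>0 < d\<close> in simp)
qed

lemma integrable_continuous_indicator_Ioo:
  fixes h :: "real \<Rightarrow> real"
  assumes "continuous_on UNIV h"
  shows "integrable lborel (\<lambda>s. h s * indicator {a<..<b} s)"
proof -
  have "set_integrable lborel {a..b} h"
    by (intro borel_integrable_atLeastAtMost' continuous_on_subset[OF assms]) auto
  then have "set_integrable lborel {a<..<b} h"
    by (rule set_integrable_subset) auto
  then show ?thesis by (simp add: set_integrable_def mult.commute)
qed

lemma integral_Ioo_deviation_le:
  fixes h :: "real \<Rightarrow> real"
  assumes "continuous_on UNIV h" and "0 \<le> r"
    and near: "\<And>s. s \<in> {a - r<..<a + r} \<Longrightarrow> \<bar>h s - c\<bar> \<le> b"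
  shows "\<bar>(\<integral>s. h s * indicator {a - r<..<a + r} s \<partial>lborel) - 2 * r * c\<bar> \<le> 2 * r * b"
proof -
  let ?I = "{a - r<..<a + r}"
  have ind: "integrable lborel (indicator ?I :: real \<Rightarrow> real)" and "measure lborel ?I = 2 * r"
    using \<open>0 \<le> r\<close> by auto
  then have "(\<integral>s. h s * indicator ?I s \<partial>lborel) - 2 * r * c = (\<integral>s. (h s - c) * indicator ?I s \<partial>lborel)"
    using integrable_continuous_indicator_Ioo[OF assms(1)] by (simp add: left_diff_distrib)
  also have "\<bar>\<dots>\<bar> \<le> (\<integral>s. \<bar>(h s - c) * indicator ?I s\<bar> \<partial>lborel)"
    by (rule integral_abs_bound)
  also have "\<dots> \<le> (\<integral>s. b * indicator ?I s \<partial>lborel)"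
  proof (rule integral_mono')
    show "integrable lborel (\<lambda>s. b * indicator ?I s)" using ind by simp
    fix s
    have "0 \<le> b" if "s \<in> ?I" using near[OF that] abs_ge_zero order_trans by blast
    then show "\<bar>(h s - c) * indicator ?I s\<bar> \<le> b * indicator ?I s" and "0 \<le> b * indicator ?I s"
      using near[of s] by (auto simp: indicator_def)
  qed
  also have "\<dots> = 2 * r * b"
    using \<open>measure lborel ?I = 2 * r\<close> by simp
  finally show ?thesis .
qed

definition mollified_slice :: "(real \<times> real) measure \<Rightarrow> real \<Rightarrow> (real \<times> real \<Rightarrow> real) \<Rightarrow> real \<Rightarrow> real"
  where "mollified_slice M t \<eta> \<epsilon> = (\<integral>s. \<eta> (s, t) * mu_eps M \<epsilon> (s, t) \<partial>lborel)"

lemma chi_eps_diff: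
  assumes "0 < \<epsilon>"
  shows "chi_eps \<epsilon> ((s, t) - y) = indicator {fst y - \<epsilon>/2<..<fst y + \<epsilon>/2} s
           * indicator (rho2 -` {t - \<epsilon>/2<..<t + \<epsilon>/2}) y / \<epsilon>^2"
proof -
  have "(1/\<epsilon>) *\<^sub>R ((s, t) - y) \<in> Qbox \<longleftrightarrow>
      s \<in> {fst y - \<epsilon>/2<..<fst y + \<epsilon>/2} \<and> y \<in> rho2 -` {t - \<epsilon>/2<..<t + \<epsilon>/2}"
  proof -
    have "(-1/2 < (s - fst y)/\<epsilon> \<and> (s - fst y)/\<epsilon> < 1/2) \<longleftrightarrow> (fst y - \<epsilon>/2 < s \<and> s < fst y + \<epsilon>/2)"
     and "(-1/2 < (t - snd y)/\<epsilon> \<and> (t - snd y)/\<epsilon> < 1/2) \<longleftrightarrow> (t - \<epsilon>/2 < snd y \<and> snd y < t + \<epsilon>/2)"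
      using assms by (auto simp: field_simps)
    moreover have "(1/\<epsilon>) *\<^sub>R ((s, t) - y) = ((s - fst y)/\<epsilon>, (t - snd y)/\<epsilon>)"
      by (cases y) (simp add: divide_inverse mult.commute)
    ultimately show ?thesis
      unfolding Qbox_def rho2_def by auto
  qed
  moreover have "\<epsilon> powi (-2) = 1 / \<epsilon>^2"
    by (simp add: power_int_minus divide_inverse)
  ultimately show ?thesis
    unfolding chi_eps_def by (simp add: indicator_def)
qed

lemma borel_measurable_mollifier_integrand:
  assumes "sets M = sets borel" and "continuous_on UNIV \<eta>"
  shows "(\<lambda>(y, s). \<eta> (s, t) * chi_eps \<epsilon> ((s, t) - y)) \<in> borel_measurable (M \<Otimes>\<^sub>M lborel)"
proof -
  have sets_eq: "measurable (M \<Otimes>\<^sub>M lborel) (borel :: real measure) = measurable (borel \<Otimes>\<^sub>M borel) borel"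
    by (rule measurable_cong_sets) (auto intro!: sets_pair_measure_cong assms(1))
  have "open Qbox"
    unfolding Qbox_def by (intro open_Collect_conj open_Collect_less continuous_intros)
  then have ind: "(\<lambda>z. indicator Qbox ((1/\<epsilon>) *\<^sub>R ((snd z, t) - fst z)) :: real) \<in> borel_measurable borel"
    by (intro measurable_compose[OF borel_measurable_continuous_onI borel_measurable_indicator])
      (auto intro!: continuous_intros)
  have cont: "continuous_on UNIV (\<lambda>z::(real \<times> real) \<times> real. \<eta> (snd z, t))"
    by (rule continuous_on_compose2[OF assms(2)]) (auto intro!: continuous_intros)
  have "(\<lambda>z. \<eta> (snd z, t) * chi_eps \<epsilon> ((snd z, t) - fst z)) \<in> borel_measurable borel"
    unfolding chi_eps_def
    by (intro borel_measurable_times borel_measurable_const borel_measurable_continuous_onI[OF cont] ind)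
  then show ?thesis
    unfolding sets_eq borel_prod case_prod_beta' .
qed

lemma slab_avg_tendsto_slice_integral:
  assumes "slice_exists M t" and "continuous_on UNIV \<eta>"
  shows "(slab_avg M t \<eta> \<longlongrightarrow> slice_integral M t \<eta>) (at_right 0)"
proof -
  obtain L where "(slab_avg M t \<eta> \<longlongrightarrow> L) (at_right 0)"
    using assms unfolding slice_exists_def by blast
  moreover from this have "slice_integral M t \<eta> = L"
    unfolding slice_integral_def by (intro tendsto_Lim) auto
  ultimately show ?thesis by simp
qed

lemma slab_avg_half_tendsto_slice_integral:
  assumes "slice_exists M t" and "continuous_on UNIV \<eta>"
  shows "((\<lambda>\<epsilon>. slab_avg M t \<eta> (\<epsilon>/2)) \<longlongrightarrow> slice_integral M t \<eta>) (at_right 0)"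
proof -
  have "filterlim (\<lambda>\<epsilon>::real. \<epsilon>/2) (at_right 0) (at_right 0)"
    using filterlim_times_pos[OF filterlim_ident, of "1/2" 0 0] by simp
  then show ?thesis
    by (rule filterlim_compose[OF slab_avg_tendsto_slice_integral[OF assms]])
qed

context
  fixes M :: "(real \<times> real) measure" and C :: "(real \<times> real) set"
  assumes sets_M: "sets M = sets borel" and finite_M: "finite_measure M"
    and compact_C: "compact C" and null_outside_C: "emeasure M (UNIV - C) = 0"
begin

lemma AE_in_support: "AE y in M. y \<in> C"
proof (rule AE_I')
  show "UNIV - C \<in> null_sets M"
    using null_outside_C compact_imp_closed[OF compact_C]
    by (auto simp: null_sets_def sets_M Compl_eq_Diff_UNIV[symmetric] open_Compl)
qed (use sets_eq_imp_space_eq[OF sets_M] in auto)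

lemma borel_measurable_M: "f \<in> borel_measurable borel \<Longrightarrow> f \<in> borel_measurable M"
  using measurable_cong_sets[OF sets_M refl] by blast

lemma integrable_continuous:
  fixes h :: "real \<times> real \<Rightarrow> real"
  assumes "continuous_on UNIV h"
  shows "integrable M h"
proof -
  interpret finite_measure M by (rule finite_M)
  obtain B where B: "\<forall>x\<in>h ` C. norm x \<le> B"
    using compact_imp_bounded[OF compact_continuous_image[OF continuous_on_subset[OF assms] compact_C]]
    by (auto simp: bounded_iff)
  have "AE x in M. norm (h x) \<le> B"
    using AE_in_support by eventually_elim (use B in auto)
  then show ?thesis
    using borel_measurable_M[OF borel_measurable_continuous_onI[OF assms]]
    by (intro integrable_const_bound)
qed

lemma slab_in_sets: "rho2 -` {a<..<b} \<in> sets M"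
proof -
  have "open (rho2 -` {a<..<b})"
    unfolding rho2_def vimage_def greaterThanLessThan_iff
    by (intro open_Collect_conj open_Collect_less continuous_intros)
  then show ?thesis by (simp add: sets_M)
qed

lemma integrable_slab:
  fixes h :: "real \<times> real \<Rightarrow> real"
  assumes "continuous_on UNIV h"
  shows "integrable M (\<lambda>x. indicator (rho2 -` {a<..<b}) x * h x)"
  using integrable_mult_indicator[OF slab_in_sets integrable_continuous[OF assms]] by simp

lemma slab_avg_diff_le:
  fixes h g :: "real \<times> real \<Rightarrow> real"
  assumes "continuous_on UNIV h" and "continuous_on UNIV g"
    and close: "\<And>x. \<bar>h x - g x\<bar> \<le> c" and "0 < \<delta>"
  shows "\<bar>slab_avg M t h \<delta> - slab_avg M t g \<delta>\<bar> \<le> c * slab_avg M t (\<lambda>_. 1) \<delta>"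
proof -
  let ?S = "rho2 -` {t - \<delta><..<t + \<delta>}"
  have "slab_avg M t h \<delta> - slab_avg M t g \<delta> = (\<integral>x. indicator ?S x * (h x - g x) \<partial>M) / (2 * \<delta>)"
    using integrable_slab[OF assms(1)] integrable_slab[OF assms(2)]
    by (simp add: slab_avg_def right_diff_distrib diff_divide_distrib)
  also have "\<bar>\<dots>\<bar> \<le> (\<integral>x. c * indicator ?S x \<partial>M) / (2 * \<delta>)"
  proof -
    have "\<bar>\<integral>x. indicator ?S x * (h x - g x) \<partial>M\<bar> \<le> (\<integral>x. \<bar>indicator ?S x * (h x - g x)\<bar> \<partial>M)"
      by (rule integral_abs_bound)
    also have "\<dots> \<le> (\<integral>x. c * indicator ?S x \<partial>M)"
    proof (rule integral_mono')
      show "integrable M (\<lambda>x. c * indicator ?S x)"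
        using integrable_slab[of "\<lambda>_. c"] by (simp add: mult.commute)
      have "0 \<le> c" using close[of undefined] by linarith
      then show "\<bar>indicator ?S x * (h x - g x)\<bar> \<le> c * indicator ?S x" and "0 \<le> c * indicator ?S x" for x
        using close[of x] by (auto simp: indicator_def)
    qed
    finally show ?thesis
      using \<open>0 < \<delta>\<close> by (simp add: abs_divide divide_right_mono)
  qed
  also have "\<dots> = c * slab_avg M t (\<lambda>_. 1) \<delta>"
    by (simp add: slab_avg_def)
  finally show ?thesis .
qed

lemma bounded_near_support:
  fixes \<eta> :: "real \<times> real \<Rightarrow> real"
  assumes "continuous_on UNIV \<eta>"
  obtains B where "0 \<le> B" and "\<And>y s. y \<in> C \<Longrightarrow> \<bar>s - fst y\<bar> \<le> r \<Longrightarrow> \<bar>\<eta> (s, t)\<bar> \<le> B"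
proof -
  let ?D = "(\<lambda>p. (fst (fst p) + snd p, t)) ` (C \<times> {-r..r})"
  have "compact ?D"
    by (intro compact_continuous_image compact_Times compact_C compact_Icc continuous_intros)
  have "bounded (\<eta> ` ?D)"
    by (rule compact_imp_bounded[OF compact_continuous_image[OF continuous_on_subset[OF assms subset_UNIV] \<open>compact ?D\<close>]])
  then obtain B where B: "\<forall>x\<in>\<eta> ` ?D. norm x \<le> B"
    unfolding bounded_iff by blast
  show thesis
  proof (rule that[of "\<bar>B\<bar>"])
    fix y s assume "y \<in> C" and "\<bar>s - fst y\<bar> \<le> r"
    then have "(s, t) \<in> ?D"
      by (intro image_eqI[of _ _ "(y, s - fst y)"]) (auto simp: abs_le_iff)
    then have "norm (\<eta> (s, t)) \<le> B" using B by blast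
    then show "\<bar>\<eta> (s, t)\<bar> \<le> \<bar>B\<bar>" by simp
  qed simp
qed

lemma mollified_slice_eq_integral:
  fixes \<eta> :: "real \<times> real \<Rightarrow> real" and t \<epsilon> :: real
  assumes \<eta>: "continuous_on UNIV \<eta>" and "0 < \<epsilon>"
  defines "S \<equiv> rho2 -` {t - \<epsilon>/2<..<t + \<epsilon>/2}"
    and "J \<equiv> \<lambda>y. \<integral>s. \<eta> (s, t) * indicator {fst y - \<epsilon>/2<..<fst y + \<epsilon>/2} s \<partial>lborel"
  shows "integrable M (\<lambda>y. indicator S y * J y / \<epsilon>^2)"
    and "mollified_slice M t \<eta> \<epsilon> = (\<integral>y. indicator S y * J y / \<epsilon>^2 \<partial>M)"
proof -
  interpret finite_measure M by (rule finite_M)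
  interpret P: pair_sigma_finite M lborel
    by (intro pair_sigma_finite.intro sigma_finite_measure_axioms lborel.sigma_finite_measure_axioms)
  let ?I = "\<lambda>y. {fst y - \<epsilon>/2<..<fst y + \<epsilon>/2}"
  define f where "f = (\<lambda>(y, s). \<eta> (s, t) * chi_eps \<epsilon> ((s, t) - y))"
  have f_eq: "f (y, s) = indicator S y * (\<eta> (s, t) * indicator (?I y) s) / \<epsilon>^2" for y s
    using chi_eps_diff[OF \<open>0 < \<epsilon>\<close>] by (simp add: f_def S_def)
  have \<eta>_line: "continuous_on UNIV (\<lambda>s. \<eta> (s, t))"
    by (rule continuous_on_compose2[OF \<eta>]) (auto intro!: continuous_intros)
  have f_meas: "f \<in> borel_measurable (M \<Otimes>\<^sub>M lborel)"
    unfolding f_def by (rule borel_measurable_mollifier_integrand[OF sets_M \<eta>])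
  have inner_integrable: "integrable lborel (\<lambda>s. f (y, s))" for y
    unfolding f_eq using integrable_continuous_indicator_Ioo[OF \<eta>_line] by simp
  obtain B where "0 \<le> B" and B: "\<And>y s. y \<in> C \<Longrightarrow> \<bar>s - fst y\<bar> \<le> \<epsilon>/2 \<Longrightarrow> \<bar>\<eta> (s, t)\<bar> \<le> B"
    using bounded_near_support[OF \<eta>] by blast
  have "(\<integral>s. norm (f (y, s)) \<partial>lborel) \<le> B / \<epsilon>" if "y \<in> C" for y
  proof -
    have "(\<integral>s. norm (f (y, s)) \<partial>lborel) \<le> (\<integral>s. B * indicator (?I y) s / \<epsilon>^2 \<partial>lborel)"
    proof (rule integral_mono')
      show "integrable lborel (\<lambda>s. B * indicator (?I y) s / \<epsilon>^2)"
        using \<open>0 < \<epsilon>\<close> by simp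
      show "norm (f (y, s)) \<le> B * indicator (?I y) s / \<epsilon>^2" for s
      proof (cases "s \<in> ?I y")
        case True
        then have "\<bar>\<eta> (s, t)\<bar> \<le> B"
          by (intro B[OF that]) (auto split: abs_split)
        then show ?thesis
          using True \<open>0 \<le> B\<close> by (simp add: f_eq abs_mult divide_right_mono indicator_def)
      qed (simp add: f_eq)
    qed (use \<open>0 \<le> B\<close> in simp)
    also have "\<dots> = B / \<epsilon>"
      using \<open>0 < \<epsilon>\<close> by (simp add: power2_eq_square)
    finally show ?thesis .
  qed
  then have "integrable M (\<lambda>y. \<integral>s. norm (f (y, s)) \<partial>lborel)"
    using AE_in_support f_meas
    by (intro integrable_const_bound[where B="B/\<epsilon>"] lborel.borel_measurable_lebesgue_integral)
      (auto elim!: eventually_mono)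
  then have f_integrable: "integrable (M \<Otimes>\<^sub>M lborel) f"
    using P.Fubini_integrable[OF f_meas] inner_integrable by blast
  have inner: "(\<integral>s. f (y, s) \<partial>lborel) = indicator S y * J y / \<epsilon>^2" for y
    by (simp add: f_eq J_def)
  show "integrable M (\<lambda>y. indicator S y * J y / \<epsilon>^2)"
    using P.integrable_fst'[OF f_integrable] by (simp add: inner)
  have "mollified_slice M t \<eta> \<epsilon> = (\<integral>s. (\<integral>y. f (y, s) \<partial>M) \<partial>lborel)"
    by (simp add: mollified_slice_def mu_eps_def f_def)
  also have "\<dots> = (\<integral>y. (\<integral>s. f (y, s) \<partial>lborel) \<partial>M)"
    using P.Fubini_integral[of "\<lambda>y s. f (y, s)"] f_integrable by simp
  finally show "mollified_slice M t \<eta> \<epsilon> = (\<integral>y. indicator S y * J y / \<epsilon>^2 \<partial>M)"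
    by (simp add: inner)
qed

text \<open>With \<open>\<delta> = \<epsilon>/2\<close> the slab of the slab average is exactly the set of \<open>y\<close>
  whose \<open>\<epsilon>\<close>-square meets the line \<open>{x\<^sub>2 = t}\<close>.\<close>

lemma mollified_slice_slab_avg_deviation:
  fixes \<eta> :: "real \<times> real \<Rightarrow> real"
  assumes \<eta>: "continuous_on UNIV \<eta>" and "0 < \<epsilon>"
    and near: "\<And>y x. y \<in> C \<Longrightarrow> dist x y < \<epsilon> \<Longrightarrow> \<bar>\<eta> x - \<eta> y\<bar> \<le> b"
  shows "\<bar>mollified_slice M t \<eta> \<epsilon> - slab_avg M t \<eta> (\<epsilon>/2)\<bar> \<le> b * slab_avg M t (\<lambda>_. 1) (\<epsilon>/2)"
proof -
  define S where "S = rho2 -` {t - \<epsilon>/2<..<t + \<epsilon>/2}"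
  define J where "J y = (\<integral>s. \<eta> (s, t) * indicator {fst y - \<epsilon>/2<..<fst y + \<epsilon>/2} s \<partial>lborel)" for y :: "real \<times> real"
  have slab: "slab_avg M t h (\<epsilon>/2) = (\<integral>y. indicator S y * h y \<partial>M) / \<epsilon>" for h
    by (simp add: slab_avg_def S_def)
  have pointwise: "\<bar>indicator S y * J y / \<epsilon>^2 - indicator S y * \<eta> y / \<epsilon>\<bar> \<le> b * indicator S y / \<epsilon>"
    if "y \<in> C" for y
  proof (cases "y \<in> S")
    case True
    have "\<bar>J y - 2 * (\<epsilon>/2) * \<eta> y\<bar> \<le> 2 * (\<epsilon>/2) * b"
      unfolding J_def
    proof (rule integral_Ioo_deviation_le)
      show "continuous_on UNIV (\<lambda>s. \<eta> (s, t))"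
        by (rule continuous_on_compose2[OF \<eta>]) (auto intro!: continuous_intros)
      fix s assume "s \<in> {fst y - \<epsilon>/2<..<fst y + \<epsilon>/2}"
      then have "\<bar>s - fst y\<bar> < \<epsilon>/2" by (auto split: abs_split)
      moreover have "\<bar>t - snd y\<bar> < \<epsilon>/2"
        using True by (auto simp: S_def rho2_def split: abs_split)
      moreover have "dist (s, t) y \<le> \<bar>s - fst y\<bar> + \<bar>t - snd y\<bar>"
        by (cases y) (simp add: dist_Pair_Pair dist_real_def sqrt_sum_squares_le_sum_abs)
      ultimately have "dist (s, t) y < \<epsilon>" by linarith
      then show "\<bar>\<eta> (s, t) - \<eta> y\<bar> \<le> b" by (rule near[OF that])
    qed (use \<open>0 < \<epsilon>\<close> in simp)
    then have "\<bar>J y - \<epsilon> * \<eta> y\<bar> / \<epsilon>^2 \<le> \<epsilon> * b / \<epsilon>^2"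
      by (simp add: divide_right_mono)
    then show ?thesis
      using True \<open>0 < \<epsilon>\<close> by (simp add: power2_eq_square field_simps abs_divide)
  qed simp
  have "mollified_slice M t \<eta> \<epsilon> - slab_avg M t \<eta> (\<epsilon>/2)
      = (\<integral>y. indicator S y * J y / \<epsilon>^2 - indicator S y * \<eta> y / \<epsilon> \<partial>M)"
    using mollified_slice_eq_integral[OF \<eta> \<open>0 < \<epsilon>\<close>, of t] integrable_slab[OF \<eta>]
    unfolding slab S_def J_def by simp
  also have "\<bar>\<dots>\<bar> \<le> (\<integral>y. b * indicator S y / \<epsilon> \<partial>M)"
  proof (rule order_trans[OF integral_abs_bound integral_mono_AE'])
    show "integrable M (\<lambda>y. b * indicator S y / \<epsilon>)"
      using integrable_slab[of "\<lambda>_. b", of "t - \<epsilon>/2" "t + \<epsilon>/2"] by (simp add: S_def mult.commute)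
    show "AE y in M. \<bar>indicator S y * J y / \<epsilon>^2 - indicator S y * \<eta> y / \<epsilon>\<bar> \<le> b * indicator S y / \<epsilon>"
      and "AE y in M. 0 \<le> b * indicator S y / \<epsilon>"
      using AE_in_support by (auto elim!: eventually_mono dest: pointwise intro: order_trans[OF abs_ge_zero])
  qed
  also have "\<dots> = b * slab_avg M t (\<lambda>_. 1) (\<epsilon>/2)"
    by (simp add: slab)
  finally show ?thesis .
qed

lemma slice_integral_diff_le:
  fixes h g :: "real \<times> real \<Rightarrow> real"
  assumes slice: "slice_exists M t"
    and "continuous_on UNIV h" and "continuous_on UNIV g" and "\<And>x. \<bar>h x - g x\<bar> \<le> c"
  shows "\<bar>slice_integral M t h - slice_integral M t g\<bar> \<le> c * slice_integral M t (\<lambda>_. 1)"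
proof (rule tendsto_le[OF trivial_limit_at_right_real])
  show "((\<lambda>\<delta>. c * slab_avg M t (\<lambda>_. 1) \<delta>) \<longlongrightarrow> c * slice_integral M t (\<lambda>_. 1)) (at_right 0)"
    by (intro tendsto_intros slab_avg_tendsto_slice_integral[OF slice]) auto
  show "((\<lambda>\<delta>. \<bar>slab_avg M t h \<delta> - slab_avg M t g \<delta>\<bar>) \<longlongrightarrow> \<bar>slice_integral M t h - slice_integral M t g\<bar>) (at_right 0)"
    by (intro tendsto_intros slab_avg_tendsto_slice_integral[OF slice] assms(2,3))
  show "\<forall>\<^sub>F \<delta> in at_right 0. \<bar>slab_avg M t h \<delta> - slab_avg M t g \<delta>\<bar> \<le> c * slab_avg M t (\<lambda>_. 1) \<delta>"
    using eventually_at_right_less[of "0::real"]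
    by eventually_elim (rule slab_avg_diff_le[OF assms(2-4)])
qed

lemma mollified_slice_locally_uniform:
  assumes slice: "slice_exists M t" and g: "continuous_on UNIV g" and "0 < e"
  obtains c where "0 < c" and "eventually (\<lambda>\<epsilon>. \<forall>\<eta>. continuous_on UNIV \<eta> \<longrightarrow>
      (\<forall>x. dist (\<eta> x) (g x) < c) \<longrightarrow> dist (mollified_slice M t \<eta> \<epsilon>) (slice_integral M t \<eta>) < e) (at_right 0)"
proof -
  \<comment> \<open>error budget: \<open>3cm + cm + cm + e/4 < e\<close>\<close>
  define m where "m = \<bar>slice_integral M t (\<lambda>_. 1)\<bar> + 1"
  define c where "c = e / (8 * m)"
  have "0 < m" by (simp add: m_def add_nonneg_pos)
  then have "0 < c" and cm: "c * m = e / 8"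
    using \<open>0 < e\<close> by (simp_all add: c_def)
  obtain d where "0 < d" and d: "\<And>y x. y \<in> C \<Longrightarrow> dist x y < d \<Longrightarrow> dist (g x) (g y) < c"
    using uniformly_continuous_near_compact[OF compact_C g \<open>0 < c\<close>] by blast
  have "eventually (\<lambda>\<epsilon>. 0 < \<epsilon> \<and> \<epsilon> < d) (at_right 0)"
    using eventually_at_right_less[of "0::real"] eventually_at_right_field \<open>0 < d\<close> by blast
  moreover have "eventually (\<lambda>\<epsilon>. slab_avg M t (\<lambda>_. 1) (\<epsilon>/2) < m) (at_right 0)"
    using order_tendstoD(2)[OF slab_avg_half_tendsto_slice_integral[OF slice, of "\<lambda>_. 1"], of m]
    by (auto simp: m_def)
  moreover have "eventually (\<lambda>\<epsilon>. \<bar>slab_avg M t g (\<epsilon>/2) - slice_integral M t g\<bar> < e/4) (at_right 0)"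
    using tendstoD[OF slab_avg_half_tendsto_slice_integral[OF slice g], of "e/4"] \<open>0 < e\<close>
    by (simp add: dist_real_def)
  ultimately have "eventually (\<lambda>\<epsilon>. \<forall>\<eta>. continuous_on UNIV \<eta> \<longrightarrow> (\<forall>x. dist (\<eta> x) (g x) < c) \<longrightarrow>
      dist (mollified_slice M t \<eta> \<epsilon>) (slice_integral M t \<eta>) < e) (at_right 0)"
  proof eventually_elim
    case (elim \<epsilon>)
    show ?case
    proof (intro allI impI)
      fix \<eta> assume \<eta>: "continuous_on UNIV \<eta>" and "\<forall>x. dist (\<eta> x) (g x) < c"
      then have close: "\<bar>\<eta> x - g x\<bar> \<le> c" for x
        unfolding dist_real_def by (meson less_imp_le)
      let ?A = "\<lambda>h. slab_avg M t h (\<epsilon>/2)"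
      have "\<bar>mollified_slice M t \<eta> \<epsilon> - ?A \<eta>\<bar> \<le> 3 * c * ?A (\<lambda>_. 1)"
      proof (rule mollified_slice_slab_avg_deviation[OF \<eta>])
        show "0 < \<epsilon>" using elim by simp
        fix y x assume "y \<in> C" and "dist x y < \<epsilon>"
        then have "\<bar>g x - g y\<bar> \<le> c"
          using d[of y x] elim by (simp add: dist_real_def)
        then show "\<bar>\<eta> x - \<eta> y\<bar> \<le> 3 * c"
          using close[of x] close[of y] by linarith
      qed
      moreover have "\<bar>?A \<eta> - ?A g\<bar> \<le> c * ?A (\<lambda>_. 1)"
        using elim by (intro slab_avg_diff_le[OF \<eta> g close]) simp
      moreover have "\<bar>slice_integral M t \<eta> - slice_integral M t g\<bar> \<le> c * slice_integral M t (\<lambda>_. 1)"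
        by (rule slice_integral_diff_le[OF slice \<eta> g close])
      moreover have "c * ?A (\<lambda>_. 1) \<le> c * m" and "c * slice_integral M t (\<lambda>_. 1) \<le> c * m"
        using elim \<open>0 < c\<close> by (auto simp: m_def intro!: mult_left_mono)
      ultimately show "dist (mollified_slice M t \<eta> \<epsilon>) (slice_integral M t \<eta>) < e"
        using elim cm unfolding dist_real_def by (simp only: mult.assoc)
    qed
  qed
  with \<open>0 < c\<close> show thesis by (rule that)
qed

end

theorem lemma3p1:
  fixes M :: "(real \<times> real) measure" and t :: real
  assumes "compact_radon M"
    and "slice_exists M t"
  shows "(\<forall>\<eta>. continuous_on UNIV \<eta> \<longrightarrow>
            ((\<lambda>\<epsilon>. \<integral>s. \<eta> (s, t) * mu_eps M \<epsilon> (s, t) \<partial>lborel)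
               \<longlongrightarrow> slice_integral M t \<eta>) (at_right 0))
      \<and> (\<forall>K. K \<subseteq> {\<eta>. continuous_on UNIV \<eta>} \<and> sup_compact K \<longrightarrow>
            uniform_limit K (\<lambda>\<epsilon> \<eta>. \<integral>s. \<eta> (s, t) * mu_eps M \<epsilon> (s, t) \<partial>lborel)
              (slice_integral M t) (at_right 0))"
proof -
  obtain C where "sets M = sets borel" and "finite_measure M" and "compact C"
    and "emeasure M (UNIV - C) = 0"
    using assms(1) unfolding compact_radon_def by blast
  note locally_uniform = mollified_slice_locally_uniform[OF this assms(2)]
  have "(mollified_slice M t \<eta> \<longlongrightarrow> slice_integral M t \<eta>) (at_right 0)"
    if \<eta>: "continuous_on UNIV \<eta>" for \<eta>
  proof (rule tendstoI)
    fix e :: real assume "0 < e"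
    obtain c where "0 < c" and ev: "eventually (\<lambda>\<epsilon>. \<forall>\<eta>'. continuous_on UNIV \<eta>' \<longrightarrow>
        (\<forall>x. dist (\<eta>' x) (\<eta> x) < c) \<longrightarrow> dist (mollified_slice M t \<eta>' \<epsilon>) (slice_integral M t \<eta>') < e) (at_right 0)"
      by (rule locally_uniform[OF \<eta> \<open>0 < e\<close>])
    from ev show "eventually (\<lambda>\<epsilon>. dist (mollified_slice M t \<eta> \<epsilon>) (slice_integral M t \<eta>) < e) (at_right 0)"
      by eventually_elim (use \<eta> \<open>0 < c\<close> in force)
  qed
  moreover have "uniform_limit K (\<lambda>\<epsilon> \<eta>. mollified_slice M t \<eta> \<epsilon>) (slice_integral M t) (at_right 0)"
    if K: "K \<subseteq> {\<eta>. continuous_on UNIV \<eta>}" and "sup_compact K" for K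
  proof (rule uniform_limit_at_right_if_locally_uniform)
    show "\<exists>r g. strict_mono r \<and> g \<in> K \<and> uniform_limit UNIV (\<lambda>n. f (r n)) g sequentially"
      if "\<And>n. f n \<in> K" for f :: "nat \<Rightarrow> real \<times> real \<Rightarrow> real"
      using \<open>sup_compact K\<close>[unfolded sup_compact_def, rule_format, of f] that by blast
    fix g and e :: real assume "g \<in> K" and "0 < e"
    then have "continuous_on UNIV g" using K by blast
    obtain c where "0 < c" and ev: "eventually (\<lambda>\<epsilon>. \<forall>\<eta>. continuous_on UNIV \<eta> \<longrightarrow>
        (\<forall>x. dist (\<eta> x) (g x) < c) \<longrightarrow> dist (mollified_slice M t \<eta> \<epsilon>) (slice_integral M t \<eta>) < e) (at_right 0)"
      by (rule locally_uniform[OF \<open>continuous_on UNIV g\<close> \<open>0 < e\<close>])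
    from ev have "eventually (\<lambda>\<epsilon>. \<forall>\<eta>\<in>K. (\<forall>x. dist (\<eta> x) (g x) < c) \<longrightarrow>
        dist (mollified_slice M t \<eta> \<epsilon>) (slice_integral M t \<eta>) < e) (at_right 0)"
      by eventually_elim (use K in blast)
    with \<open>0 < c\<close> show "\<exists>c>0. eventually (\<lambda>\<epsilon>. \<forall>\<eta>\<in>K. (\<forall>x. dist (\<eta> x) (g x) < c) \<longrightarrow>
        dist (mollified_slice M t \<eta> \<epsilon>) (slice_integral M t \<eta>) < e) (at_right 0)"
      by blast
  qed
  ultimately show ?thesis
    unfolding mollified_slice_def[abs_def] by simp
qed

end
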